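(* Let $B_1,\dots,B_D$ be resonator blocks and define $\Sigma=\bigcup_{\chi_+\in\{1,\dots,D\}^{\mathbb{Z}_{\ge0}}}\big(\sigma(\mathcal{J}_+(\chi_+))\cup\sigma(\mathcal{J}_-(\chi_+))\big)$. Let $M\in\mathbb{N}$ and $\chi_M\in\{1,\dots,D\}^M$, and let $V,C\in\mathbb{R}^{N\times N}$ be the material and capacitance matrices of the finite resonator array determined by $\chi_M$. Then $\sigma(VC)\subset\Sigma$.
   Context: A resonator block $B_d$ is a finite sequence of $\mathrm{len}(B_d)\ge1$ triples $(v_k,\ell_k,s_k)$ of positive reals (wave speed, length, spacing to the next resonator). The finite array of $\chi_M$ is the concatenation $B_{\chi_M(1)},\dots,B_{\chi_M(M)}$, giving $N$ resonators with parameters $(v_i,\ell_i,s_i)_{i=1}^N$. Then $V=\mathrm{diag}(v_1^2/\ell_1,\dots,v_N^2/\ell_N)$ and $C$ is the symmetric tridiagonal matrix with $C_{i,i+1}=C_{i+1,i}=-1/s_i$ ($1\le i\le N-1$), $C_{11}=1/s_1$, $C_{NN}=1/s_{N-1}$, $C_{ii}=1/s_{i-1}+1/s_i$ for $2\le i\le N-1$. For a resonator sequence set $a^{(i)}=-\frac{v_iv_{i+1}}{s_i\sqrt{\ell_i\ell_{i+1}}}$, $b^{(i)}=\frac{v_i^2}{\ell_i}(\frac1{s_{i-1}}+\frac1{s_i})$. $\mathcal{J}_+(\chi_+)$: resonators indexed by $i\ge0$ obtained by concatenating $B_{\chi_+(0)},B_{\chi_+(1)},\dots$; operator on $\ell^2(\mathbb{Z}_{\ge0})$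 with $(\mathcal{J}_+\mathbf{v})^{(i)}=a^{(i-1)}\mathbf{v}^{(i-1)}+a^{(i)}\mathbf{v}^{(i+1)}+b^{(i)}\mathbf{v}^{(i)}$ for $i\ge1$ and $(\mathcal{J}_+\mathbf{v})^{(0)}=a^{(0)}\mathbf{v}^{(1)}+\frac{v_0^2}{\ell_0s_0}\mathbf{v}^{(0)}$. $\mathcal{J}_-(\chi_+)$: resonators indexed by $i\le-1$ obtained by placing blocks $\dots,B_{\chi_+(1)},B_{\chi_+(0)}$ left to right (each block internally in original order, last resonator of $B_{\chi_+(0)}$ at index $-1$); operator on $\ell^2(\mathbb{Z}_{<0})$ given by the bulk formula for $i\le-2$ and $(\mathcal{J}_-\mathbf{v})^{(-1)}=a^{(-2)}\mathbf{v}^{(-2)}+\frac{v_{-1}^2}{\ell_{-1}s_{-2}}\mathbf{v}^{(-1)}$. *)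

theory Defs
  imports "HOL-Analysis.Analysis" "Jordan_Normal_Form.Char_Poly"
begin

(* A resonator is a triple (v, l, s) = (wave speed, length, spacing to the next resonator). *)
type_synonym resonator = "real \<times> real \<times> real"

definition wspeed :: "resonator \<Rightarrow> real" where "wspeed r = fst r"
definition rlen   :: "resonator \<Rightarrow> real" where "rlen r = fst (snd r)"
definition rspace :: "resonator \<Rightarrow> real" where "rspace r = snd (snd r)"

definition is_block :: "resonator list \<Rightarrow> bool" where
  "is_block b \<longleftrightarrow> b \<noteq> [] \<and> (\<forall>r\<in>set b. wspeed r > 0 \<and> rlen r > 0 \<and> rspace r > 0)"

(* Resonators of J_+(chi): index i >= 0 in the concatenation B_{chi 0}, B_{chi 1}, ...
   (the first i+1 blocks contain at least i+1 resonators).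
   Resonators of J_-(chi): index -(j+1), j >= 0, in the left-to-right arrangement
   ..., B_{chi 1}, B_{chi 0}; read from the right this is rev B_{chi 0}, rev B_{chi 1}, ... *)
definition half_line_res :: "(nat \<Rightarrow> resonator list) \<Rightarrow> (nat \<Rightarrow> nat) \<Rightarrow> int \<Rightarrow> resonator" where
  "half_line_res B chi i =
     (if i \<ge> 0 then concat (map (\<lambda>k. B (chi k)) [0..<nat i + 1]) ! nat i
      else concat (map (\<lambda>k. rev (B (chi k))) [0..<nat (-i-1) + 1]) ! nat (-i-1))"

definition jac_a :: "(int \<Rightarrow> resonator) \<Rightarrow> int \<Rightarrow> real" where
  "jac_a r i = - (wspeed (r i) * wspeed (r (i+1)))
                 / (rspace (r i) * sqrt (rlen (r i) * rlen (r (i+1))))"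

definition jac_b :: "(int \<Rightarrow> resonator) \<Rightarrow> int \<Rightarrow> real" where
  "jac_b r i = (wspeed (r i))\<^sup>2 / rlen (r i) * (1 / rspace (r (i-1)) + 1 / rspace (r i))"

definition J_plus :: "(nat \<Rightarrow> resonator list) \<Rightarrow> (nat \<Rightarrow> nat) \<Rightarrow> (int \<Rightarrow> complex) \<Rightarrow> int \<Rightarrow> complex" where
  "J_plus B chi u i =
     (let r = half_line_res B chi in
      if i = 0 then of_real (jac_a r 0) * u 1
                    + of_real ((wspeed (r 0))\<^sup>2 / (rlen (r 0) * rspace (r 0))) * u 0
      else if i \<ge> 1 then of_real (jac_a r (i-1)) * u (i-1) + of_real (jac_a r i) * u (i+1)
                          + of_real (jac_b r i) * u i
      else 0)"

definition J_minus :: "(nat \<Rightarrow> resonator list) \<Rightarrow> (nat \<Rightarrow> nat) \<Rightarrow> (int \<Rightarrow> complex) \<Rightarrow> int \<Rightarrow> complex" where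
  "J_minus B chi u i =
     (let r = half_line_res B chi in
      if i = -1 then of_real (jac_a r (-2)) * u (-2)
                     + of_real ((wspeed (r (-1)))\<^sup>2 / (rlen (r (-1)) * rspace (r (-2)))) * u (-1)
      else if i \<le> -2 then of_real (jac_a r (i-1)) * u (i-1) + of_real (jac_a r i) * u (i+1)
                           + of_real (jac_b r i) * u i
      else 0)"

definition l2 :: "int set \<Rightarrow> (int \<Rightarrow> complex) set" where
  "l2 I = {u. (\<forall>i. i \<notin> I \<longrightarrow> u i = 0) \<and> (\<lambda>i. (cmod (u i))\<^sup>2) summable_on I}"

definition l2_norm :: "int set \<Rightarrow> (int \<Rightarrow> complex) \<Rightarrow> real" where
  "l2_norm I u = sqrt (infsum (\<lambda>i. (cmod (u i))\<^sup>2) I)"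

definition op_spectrum :: "int set \<Rightarrow> ((int \<Rightarrow> complex) \<Rightarrow> int \<Rightarrow> complex) \<Rightarrow> complex set" where
  "op_spectrum I T = {z. \<not> (bij_betw (\<lambda>u i. T u i - z * u i) (l2 I) (l2 I)
        \<and> (\<exists>K. \<forall>u\<in>l2 I. l2_norm I u \<le> K * l2_norm I (\<lambda>i. T u i - z * u i)))}"

definition Sigma_set :: "nat \<Rightarrow> (nat \<Rightarrow> resonator list) \<Rightarrow> complex set" where
  "Sigma_set D B = (\<Union>chi\<in>{chi. \<forall>k. chi k \<in> {1..D}}.
       op_spectrum {i. i \<ge> 0} (J_plus B chi) \<union> op_spectrum {i. i < 0} (J_minus B chi))"

(* Finite array: resonators listed 0-based (paper index i corresponds to list index i-1). *)
definition fin_array :: "(nat \<Rightarrow> resonator list) \<Rightarrow> nat list \<Rightarrow> resonator list" where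
  "fin_array B chiM = concat (map B chiM)"

definition material_mat :: "resonator list \<Rightarrow> real mat" where
  "material_mat R = mat (length R) (length R)
     (\<lambda>(i,j). if i = j then (wspeed (R!i))\<^sup>2 / rlen (R!i) else 0)"

definition capacitance_mat :: "resonator list \<Rightarrow> real mat" where
  "capacitance_mat R = (let N = length R; s = (\<lambda>k. rspace (R!k)) in
     mat N N (\<lambda>(i,j).
       if j = i + 1 then - 1 / s i
       else if i = j + 1 then - 1 / s j
       else if i = j then
         (if i = 0 then 1 / s 0
          else if i = N - 1 then 1 / s (N - 2)
          else 1 / s (i - 1) + 1 / s i)
       else 0))"

end

theory Submission
  imports Defs
begin

(* Write V = diag (q_i^2) with q_i = v_i / sqrt l_i.  Then V C x = z x says q_i^2 (L x)_i = z x_i,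
   where L is the Laplacian of the chain with weights 1 / s_i and free ends, and J_+ is q L q for
   the half-line chain obtained by repeating the array periodically.  Given an eigenvector x with
   x_0 <> 0, put c = x_(N-1) / x_0 and continue x by x_(kN+n) = c^k x_n.  The continuation has no
   jump across the gap between two copies, so the weight 1 / s_(N-1) dropped in C is never seen and
   the continuation solves the half-line equation exactly.  If |c| <= 1, its truncations after
   m copies have residual O(|c|^m) under J_+ - z but squared norm at least a multiple of
   sum_(k<m) |c|^(2k), so J_+ - z is not bounded below and z is in sigma(J_+).  If |c| > 1, the
   same argument for the reversed array and 1 / c puts z in sigma(J_-). *)

section \<open>Approximate eigenvectors\<close>

lemma l2_norm_finite_support:
  fixes u :: "int \<Rightarrow> complex" and \<phi> :: "nat \<Rightarrow> int"
  assumes inj: "inj \<phi>" and range: "range \<phi> = I" and fin: "finite F"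
    and supp: "\<And>j. j \<notin> F \<Longrightarrow> u (\<phi> j) = 0"
  shows "(\<lambda>i. (cmod (u i))\<^sup>2) summable_on I"
    and "(l2_norm I u)\<^sup>2 = (\<Sum>j\<in>F. (cmod (u (\<phi> j)))\<^sup>2)"
proof -
  let ?g = "\<lambda>i. (cmod (u i))\<^sup>2"
  have neutral: "?g i = 0" if "i \<in> I - \<phi> ` F" for i
    using that range supp by auto
  have sub: "\<phi> ` F \<subseteq> I" using range by auto
  have "?g summable_on \<phi> ` F \<longleftrightarrow> ?g summable_on I"
    by (rule summable_on_cong_neutral) (use neutral sub in auto)
  then show "?g summable_on I" using fin by simp
  have "infsum ?g I = infsum ?g (\<phi> ` F)"
    by (rule infsum_cong_neutral) (use neutral sub in auto)
  also have "\<dots> = (\<Sum>j\<in>F. ?g (\<phi> j))"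
    using fin by (simp add: sum.reindex inj_on_subset[OF inj])
  finally show "(l2_norm I u)\<^sup>2 = (\<Sum>j\<in>F. (cmod (u (\<phi> j)))\<^sup>2)"
    by (simp add: l2_norm_def sum_nonneg)
qed

lemma geometric_sum_exceeds_multiple_of_power:
  fixes t C :: real
  assumes "0 \<le> t" "t \<le> 1"
  shows "\<exists>m\<ge>1. C * t ^ m < (\<Sum>k<m. t ^ k)"
proof (rule ccontr)
  assume "\<not> ?thesis"
  then have bound: "(\<Sum>k<m. t ^ k) \<le> C * t ^ m" if "m \<ge> 1" for m
    using that by (simp add: not_less)
  show False
  proof (cases "t = 0")
    case True
    with bound[of 1] show False by simp
  next
    case False
    with assms have "t ^ m > 0" for m by simp
    have "real m \<le> C" if "m \<ge> 1" for m
    proof -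
      have "real m * t ^ m = (\<Sum>k<m. t ^ m)" by simp
      also have "\<dots> \<le> (\<Sum>k<m. t ^ k)"
        by (intro sum_mono power_decreasing) (use assms in auto)
      also have "\<dots> \<le> C * t ^ m" using bound[OF that] .
      finally show ?thesis using \<open>t ^ m > 0\<close> by simp
    qed
    from this[of "nat \<lceil>C\<rceil> + 1"] show False by linarith
  qed
qed

lemma op_spectrum_if_approximate_eigenvectors:
  fixes t \<alpha> \<beta> :: real and u :: "nat \<Rightarrow> int \<Rightarrow> complex"
  assumes t: "0 \<le> t" "t \<le> 1" and \<alpha>: "\<alpha> > 0"
    and l2: "\<And>m. m \<ge> 1 \<Longrightarrow> u m \<in> l2 I"
    and norm: "\<And>m. m \<ge> 1 \<Longrightarrow> \<alpha> * (\<Sum>k<m. t ^ k) \<le> (l2_norm I (u m))\<^sup>2"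
    and residual: "\<And>m. m \<ge> 1 \<Longrightarrow> (l2_norm I (\<lambda>i. T (u m) i - z * u m i))\<^sup>2 \<le> \<beta> * t ^ m"
  shows "z \<in> op_spectrum I T"
proof -
  have "\<exists>v\<in>l2 I. K * l2_norm I (\<lambda>i. T v i - z * v i) < l2_norm I v" for K
  proof -
    obtain m where m: "m \<ge> 1" "K\<^sup>2 * \<beta> / \<alpha> * t ^ m < (\<Sum>k<m. t ^ k)"
      using geometric_sum_exceeds_multiple_of_power[OF t] by blast
    define S where "S = l2_norm I (u m)"
    define R where "R = l2_norm I (\<lambda>i. T (u m) i - z * u m i)"
    have "S \<ge> 0" "R \<ge> 0" by (simp_all add: S_def R_def l2_norm_def infsum_nonneg)
    have "(K * R)\<^sup>2 = K\<^sup>2 * R\<^sup>2" by (rule power_mult_distrib)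
    also have "\<dots> \<le> K\<^sup>2 * (\<beta> * t ^ m)"
      using residual[OF m(1)] by (intro mult_left_mono) (simp_all add: R_def)
    also have "\<dots> < \<alpha> * (\<Sum>k<m. t ^ k)"
      using m(2) \<alpha> by (simp add: field_simps)
    also have "\<dots> \<le> S\<^sup>2" using norm[OF m(1)] by (simp add: S_def)
    finally have "K * R < S"
      using \<open>S \<ge> 0\<close> by (rule power2_less_imp_less)
    with l2[OF m(1)] show ?thesis by (auto simp: S_def R_def)
  qed
  then show ?thesis unfolding op_spectrum_def by (auto simp: not_le)
qed

section \<open>The weighted Neumann Laplacian on a half-line\<close>

lemma periodic_shift:
  fixes N k n :: nat
  assumes "\<And>j. f (j + N) = f j"
  shows "f (k * N + n) = f n"
proof (induction k)
  case (Suc k)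
  then show ?case using assms[of "k * N + n"] by (simp add: algebra_simps)
qed simp

definition neumann_lap :: "(nat \<Rightarrow> real) \<Rightarrow> (nat \<Rightarrow> complex) \<Rightarrow> nat \<Rightarrow> complex" where
  "neumann_lap w x j =
     (if j = 0 then 0 else of_real (w (j - 1)) * (x j - x (j - 1))) + of_real (w j) * (x j - x (j + 1))"

(* The capacitance matrix of a finite chain is the Laplacian whose weight behind the last
   resonator is set to 0 (capacitance_mat_row). *)
definition neumann_eigen ::
    "nat \<Rightarrow> (nat \<Rightarrow> real) \<Rightarrow> (nat \<Rightarrow> real) \<Rightarrow> (nat \<Rightarrow> complex) \<Rightarrow> complex \<Rightarrow> bool" where
  "neumann_eigen N q w x z \<longleftrightarrow>
     (\<forall>i<N. of_real ((q i)\<^sup>2) * neumann_lap (w(N - 1 := 0)) x i = z * x i)"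

lemma neumann_lap_of_ne_0:
  "j \<noteq> 0 \<Longrightarrow> neumann_lap w x j
     = of_real (w (j - 1)) * (x j - x (j - 1)) + of_real (w j) * (x j - x (j + 1))"
  by (simp add: neumann_lap_def)

lemma neumann_eigen_cong:
  assumes "neumann_eigen N q w x z"
    and "\<And>i. i < N \<Longrightarrow> q' i = q i" "\<And>i. i + 1 < N \<Longrightarrow> w' i = w i"
    and "\<And>i. i < N \<Longrightarrow> x' i = x i"
  shows "neumann_eigen N q' w' x' z"
proof -
  have "neumann_lap (w'(N - 1 := 0)) x' i = neumann_lap (w(N - 1 := 0)) x i" if "i < N" for i
    using that assms(3,4) by (cases "i = 0"; cases "i + 1 = N") (auto simp: neumann_lap_def)
  with assms(1,2,4) show ?thesis by (simp add: neumann_eigen_def)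
qed

lemma neumann_eigen_rev:
  assumes "neumann_eigen N q w x z"
  shows "neumann_eigen N (\<lambda>i. q (N - 1 - i)) (\<lambda>i. w (N - 2 - i)) (\<lambda>i. x (N - 1 - i)) z"
proof -
  have "neumann_lap ((\<lambda>i. w (N - 2 - i))(N - 1 := 0)) (\<lambda>i. x (N - 1 - i)) i
      = neumann_lap (w(N - 1 := 0)) x (N - 1 - i)" if "i < N" for i
  proof -
    consider (single) "N = 1" | (first) "N \<ge> 2" "i = 0" | (last) "N \<ge> 2" "i = N - 1"
      | (interior) "0 < i" "i < N - 1"
      using \<open>i < N\<close> by linarith
    then show ?thesis
    proof cases
      case interior
      then have "N - 2 - (i - 1) = N - 1 - i" "N - 1 - (i - 1) = N - 1 - i + 1"
        "N - 1 - (i + 1) = N - 1 - i - 1" by auto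
      with interior show ?thesis by (auto simp: neumann_lap_def algebra_simps)
    qed (auto simp: neumann_lap_def numeral_2_eq_2 Suc_diff_Suc)
  qed
  with assms show ?thesis
    by (auto simp: neumann_eigen_def)
qed

lemma neumann_eigen_first_nonzero:
  assumes eig: "neumann_eigen N q w x z"
    and q: "\<And>i. i < N \<Longrightarrow> q i \<noteq> 0" and w: "\<And>i. i + 1 < N \<Longrightarrow> w i \<noteq> 0"
    and nz: "\<exists>i<N. x i \<noteq> 0"
  shows "x 0 \<noteq> 0"
proof
  assume x0: "x 0 = 0"
  have "x i = 0" if "i < N" for i
    using that
  proof (induction i rule: less_induct)
    case (less i)
    show ?case
    proof (cases i)
      case (Suc k)
      have "x k = 0" "k > 0 \<Longrightarrow> x (k - 1) = 0"
        using less Suc by auto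
      then have "neumann_lap (w(N - 1 := 0)) x k = - of_real (w k) * x i"
        using less.prems Suc by (auto simp: neumann_lap_def)
      moreover have "of_real ((q k)\<^sup>2) * neumann_lap (w(N - 1 := 0)) x k = z * x k"
        using eig less.prems Suc by (simp add: neumann_eigen_def)
      ultimately have "of_real ((q k)\<^sup>2 * w k) * x i = 0"
        using \<open>x k = 0\<close> by simp
      then show ?thesis using q[of k] w[of k] less.prems Suc by simp
    qed (simp add: x0)
  qed
  with nz show False by blast
qed

lemma neumann_lap_periodic_continuation:
  fixes c :: complex
  assumes N: "N \<ge> 2" and w: "\<And>j. w (j + N) = w j" and c: "c * x 0 = x (N - 1)"
    and n: "n < N"
  shows "neumann_lap w (\<lambda>j. c ^ (j div N) * x (j mod N)) (k * N + n)
       = c ^ k * neumann_lap (w(N - 1 := 0)) x n"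
proof -
  (* Since c * x 0 = x (N - 1), the continuation has no jump between two copies, so the
     weight w (N - 1) dropped in the finite problem is never seen. *)
  define X where "X j = c ^ (j div N) * x (j mod N)" for j
  have X: "X (k * N + n) = c ^ k * x n" if "n < N" for k n
    using that by (simp add: X_def)
  have left: "(if k * N + n = 0 then 0
        else of_real (w (k * N + n - 1)) * (X (k * N + n) - X (k * N + n - 1)))
      = c ^ k * (if n = 0 then 0 else of_real ((w(N - 1 := 0)) (n - 1)) * (x n - x (n - 1)))"
  proof (cases "n = 0")
    case True
    show ?thesis
    proof (cases k)
      case (Suc k')
      have "k * N + n - 1 = k' * N + (N - 1)" using True Suc N by simp
      then have "X (k * N + n - 1) = c ^ k' * x (N - 1)" using X[of "N - 1" k'] N by simp
      also have "\<dots> = X (k * N + n)" using X[of 0 k] c True Suc N by simp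
      finally show ?thesis using True by simp
    qed (simp add: True)
  next
    case False
    then have "k * N + n - 1 = k * N + (n - 1)" "n - 1 \<noteq> N - 1" using n by auto
    then show ?thesis using False n X[of n k] X[of "n - 1" k] periodic_shift[of w N k "n - 1", OF w]
      by (simp add: algebra_simps)
  qed
  have right: "of_real (w (k * N + n)) * (X (k * N + n) - X (k * N + n + 1))
      = c ^ k * (of_real ((w(N - 1 := 0)) n) * (x n - x (n + 1)))"
  proof (cases "n = N - 1")
    case True
    then have e: "k * N + n + 1 = Suc k * N + 0" using N by simp
    have "X (k * N + n + 1) = c ^ Suc k * x 0" unfolding e using N by (intro X) simp
    also have "\<dots> = X (k * N + n)" using X[OF n] c True by simp
    finally show ?thesis using True by simp
  next
    case False
    then show ?thesis using n X[of n k] X[of "n + 1" k] periodic_shift[of w N k n, OF w]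
      by (simp add: algebra_simps)
  qed
  show ?thesis
    using left right unfolding neumann_lap_def X_def[symmetric] by (simp add: algebra_simps)
qed

lemma periodic_continuation_neumann_eigen:
  fixes c :: complex
  assumes N: "N \<ge> 2" and q: "\<And>j. q (j + N) = q j" and w: "\<And>j. w (j + N) = w j"
    and eig: "neumann_eigen N q w x z" and c: "c * x 0 = x (N - 1)"
  shows "of_real ((q j)\<^sup>2) * neumann_lap w (\<lambda>j. c ^ (j div N) * x (j mod N)) j
       = z * (c ^ (j div N) * x (j mod N))"
proof -
  define k n where "k = j div N" and "n = j mod N"
  have j: "j = k * N + n" and n: "n < N" using N by (simp_all add: k_def n_def)
  have "q j = q n" unfolding j by (rule periodic_shift[of q, OF q])
  moreover have "of_real ((q n)\<^sup>2) * neumann_lap (w(N - 1 := 0)) x n = z * x n"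
    using eig n by (simp add: neumann_eigen_def)
  ultimately show ?thesis
    unfolding j using neumann_lap_periodic_continuation[of N w c x n k, OF N w c n] n
    by (simp add: algebra_simps)
qed

lemma neumann_lap_truncation_residual:
  assumes eig: "\<And>j. of_real ((q j)\<^sup>2) * neumann_lap w X j = z * X j" and n: "n \<ge> 1"
  shows "of_real ((q j)\<^sup>2) * neumann_lap w (\<lambda>j. if j < n then X j else 0) j
         - z * (if j < n then X j else 0)
       = (if j + 1 = n then of_real ((q j)\<^sup>2 * w j) * X (j + 1)
          else if j = n then - of_real ((q j)\<^sup>2 * w (j - 1)) * X (j - 1) else 0)"
proof -
  have "neumann_lap w (\<lambda>j. if j < n then X j else 0) j =
     (if j + 1 < n then neumann_lap w X j
      else if j + 1 = n then neumann_lap w X j + of_real (w j) * X (j + 1)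
      else if j = n then - (of_real (w (j - 1)) * X (j - 1)) else 0)"
    using n by (auto simp: neumann_lap_def algebra_simps)
  then show ?thesis
    using eig[of j] by (auto simp: algebra_simps)
qed

lemma periodic_continuation_truncation_residual:
  fixes c :: complex and x :: "nat \<Rightarrow> complex" and N :: nat
  defines "X \<equiv> \<lambda>j. c ^ (j div N) * x (j mod N)"
  assumes N: "N \<ge> 2" and q_per: "\<And>j. q (j + N) = q j" and w_per: "\<And>j. w (j + N) = w j"
    and eig: "neumann_eigen N q w x z" and c: "c * x 0 = x (N - 1)" and m: "m \<ge> 1"
  shows "of_real ((q j)\<^sup>2) * neumann_lap w (\<lambda>j. if j < m * N then X j else 0) j
         - z * (if j < m * N then X j else 0)
       = of_real (q j) * (if j + 1 = m * N then of_real (q (N - 1) * w (N - 1)) * (c ^ m * x 0)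
          else if j = m * N then - of_real (q 0 * w (N - 1)) * (c ^ m * x 0) else 0)"
proof -
  have X_block: "X (k * N + n) = c ^ k * x n" if "n < N" for k n
    using that by (simp add: X_def)
  have cut: "m * N - 1 = (m - 1) * N + (N - 1)"
    using m N by (auto simp: algebra_simps dest!: le_Suc_ex)
  have "q (m * N - 1) = q (N - 1)" "w (m * N - 1) = w (N - 1)"
    unfolding cut by (rule periodic_shift[of q N, OF q_per] periodic_shift[of w N, OF w_per])+
  moreover have "q (m * N) = q 0"
    using periodic_shift[of q N m 0, OF q_per] by simp
  moreover have "X (m * N - 1) = c ^ (m - 1) * (c * x 0)"
    unfolding cut c using N by (intro X_block) simp
  then have "X (m * N - 1) = c ^ m * x 0"
    using m by (cases m) simp_all
  moreover have "j + 1 = m * N \<longleftrightarrow> j = m * N - 1"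
    using m N by (cases m) auto
  ultimately show ?thesis
    using neumann_lap_truncation_residual[of q w X z "m * N" j] X_block[of 0 m] m N
      periodic_continuation_neumann_eigen[OF N q_per w_per eig c]
    by (auto simp: X_def power2_eq_square)
qed

lemma periodic_continuation_norm_lower_bound:
  fixes c :: complex
  assumes N: "N > 0" and q_per: "\<And>j. q (j + N) = q j"
  shows "(cmod (x 0 / of_real (q 0)))\<^sup>2 * (\<Sum>k<m. ((cmod c)\<^sup>2) ^ k)
    \<le> (\<Sum>j<m * N. (cmod (c ^ (j div N) * x (j mod N) / of_real (q j)))\<^sup>2)"
proof -
  have block: "(cmod (c ^ k * x 0 / of_real (q (k * N))))\<^sup>2
      = (cmod (x 0 / of_real (q 0)))\<^sup>2 * ((cmod c)\<^sup>2) ^ k" for k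
    using periodic_shift[of q N k 0, OF q_per] N
    by (simp add: norm_mult norm_divide norm_power power_mult_distrib power_divide power_even_eq
        flip: power_mult)
  have "(cmod (x 0 / of_real (q 0)))\<^sup>2 * (\<Sum>k<m. ((cmod c)\<^sup>2) ^ k)
      = (\<Sum>j\<in>(\<lambda>k. k * N) ` {..<m}. (cmod (c ^ (j div N) * x (j mod N) / of_real (q j)))\<^sup>2)"
    using N by (simp add: sum_distrib_left sum.reindex inj_on_def block)
  also have "\<dots> \<le> (\<Sum>j<m * N. (cmod (c ^ (j div N) * x (j mod N) / of_real (q j)))\<^sup>2)"
    using N by (intro sum_mono2) auto
  finally show ?thesis .
qed

lemma op_spectrum_periodic_neumann_jacobi:
  fixes T :: "(int \<Rightarrow> complex) \<Rightarrow> int \<Rightarrow> complex" and \<phi> :: "nat \<Rightarrow> int"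
    and q w :: "nat \<Rightarrow> real" and x :: "nat \<Rightarrow> complex" and c z :: complex
  assumes inj: "inj \<phi>" and range: "range \<phi> = I" and N: "N \<ge> 2"
    and q_per: "\<And>j. q (j + N) = q j" and w_per: "\<And>j. w (j + N) = w j"
    and q_nz: "\<And>j. q j \<noteq> 0"
    and T: "\<And>u j. T u (\<phi> j) = of_real (q j) * neumann_lap w (\<lambda>i. of_real (q i) * u (\<phi> i)) j"
    and eig: "neumann_eigen N q w x z" and x0: "x 0 \<noteq> 0"
    and c: "c * x 0 = x (N - 1)" and c_le_1: "cmod c \<le> 1"
  shows "z \<in> op_spectrum I T"
proof -
  define Xt where "Xt m j = (if j < m * N then c ^ (j div N) * x (j mod N) else 0)" for m j
  define u where "u m i = (if i \<in> I then Xt m (the_inv \<phi> i) / of_real (q (the_inv \<phi> i)) else 0)"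
    for m i
  have u_\<phi>: "u m (\<phi> j) = Xt m j / of_real (q j)" for m j
    using inj range by (auto simp: u_def the_inv_f_f)
  have u_supp: "u m (\<phi> j) = 0" if "j \<notin> {..<m * N}" for m j
    using that by (simp add: u_\<phi> Xt_def)
  have residual: "T (u m) (\<phi> j) - z * u m (\<phi> j) =
      (if j + 1 = m * N then of_real (q (N - 1) * w (N - 1)) * (c ^ m * x 0)
       else if j = m * N then - of_real (q 0 * w (N - 1)) * (c ^ m * x 0) else 0)"
    if m: "m \<ge> 1" for m j
  proof -
    have "(\<lambda>i. of_real (q i) * u m (\<phi> i)) = Xt m" using q_nz by (auto simp: u_\<phi>)
    then have "T (u m) (\<phi> j) - z * u m (\<phi> j)
        = (of_real ((q j)\<^sup>2) * neumann_lap w (Xt m) j - z * Xt m j) / of_real (q j)"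
      using q_nz[of j] by (simp add: T u_\<phi> field_simps power2_eq_square)
    then show ?thesis
      using periodic_continuation_truncation_residual[OF N q_per w_per eig c m, of j] q_nz[of j]
      by (simp add: Xt_def[abs_def])
  qed
  define \<beta> where "\<beta> = (cmod (of_real (q (N - 1) * w (N - 1)) * x 0))\<^sup>2
    + (cmod (of_real (q 0 * w (N - 1)) * x 0))\<^sup>2"
  have residual_norm: "(l2_norm I (\<lambda>i. T (u m) i - z * u m i))\<^sup>2 = \<beta> * ((cmod c)\<^sup>2) ^ m"
    if m: "m \<ge> 1" for m
  proof -
    have "m * N - 1 \<noteq> m * N" "m * N - 1 + 1 = m * N" using m N by (cases m; simp)+
    then have "(l2_norm I (\<lambda>i. T (u m) i - z * u m i))\<^sup>2
        = (cmod (of_real (q (N - 1) * w (N - 1)) * (c ^ m * x 0)))\<^sup>2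
          + (cmod (- of_real (q 0 * w (N - 1)) * (c ^ m * x 0)))\<^sup>2"
      using l2_norm_finite_support(2)[OF inj range, of "{m * N - 1, m * N}"] by (simp add: residual[OF m])
    then show ?thesis
      by (simp add: \<beta>_def norm_mult norm_power power_mult_distrib power_even_eq algebra_simps
          flip: power_mult)
  qed
  show ?thesis
  proof (rule op_spectrum_if_approximate_eigenvectors)
    show "0 \<le> (cmod c)\<^sup>2" "(cmod c)\<^sup>2 \<le> 1" using c_le_1 by (simp_all add: power_le_one)
    show "(cmod (x 0 / of_real (q 0)))\<^sup>2 > 0" using x0 q_nz[of 0] by simp
    show "u m \<in> l2 I" for m
      using l2_norm_finite_support(1)[of \<phi> I "{..<m * N}" "u m", OF inj range _ u_supp]
      by (simp add: l2_def u_def)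
    show "(cmod (x 0 / of_real (q 0)))\<^sup>2 * (\<Sum>k<m. ((cmod c)\<^sup>2) ^ k) \<le> (l2_norm I (u m))\<^sup>2" for m
      using periodic_continuation_norm_lower_bound[of N q x c m] N q_per
        l2_norm_finite_support(2)[of \<phi> I "{..<m * N}" "u m", OF inj range _ u_supp]
      by (simp add: u_\<phi> Xt_def)
  qed (use residual_norm in auto)
qed

section \<open>Resonator chains\<close>

definition material_sqrt :: "resonator \<Rightarrow> real" where
  "material_sqrt r = wspeed r / sqrt (rlen r)"

lemma material_sqrt_sq: "rlen r > 0 \<Longrightarrow> (material_sqrt r)\<^sup>2 = (wspeed r)\<^sup>2 / rlen r"
  by (simp add: material_sqrt_def power_divide)

lemma material_sqrt_pos: "wspeed r > 0 \<Longrightarrow> rlen r > 0 \<Longrightarrow> material_sqrt r > 0"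
  by (simp add: material_sqrt_def)

lemma jac_a_material_sqrt:
  assumes "rlen (r i) > 0" "rlen (r (i + 1)) > 0"
  shows "jac_a r i = - (material_sqrt (r i) * material_sqrt (r (i + 1)) / rspace (r i))"
  using assms by (simp add: jac_a_def material_sqrt_def real_sqrt_mult)

lemma jac_b_material_sqrt:
  assumes "rlen (r i) > 0"
  shows "jac_b r i = (material_sqrt (r i))\<^sup>2 * (1 / rspace (r (i - 1)) + 1 / rspace (r i))"
  using assms by (simp add: jac_b_def material_sqrt_sq)

lemma J_plus_neumann_form:
  fixes B :: "nat \<Rightarrow> resonator list" and chi :: "nat \<Rightarrow> nat"
  defines "r \<equiv> half_line_res B chi"
  assumes len: "\<And>i. rlen (r i) > 0"
  shows "J_plus B chi u (int j) = of_real (material_sqrt (r (int j)))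
    * neumann_lap (\<lambda>i. 1 / rspace (r (int i))) (\<lambda>i. of_real (material_sqrt (r (int i))) * u (int i)) j"
proof (cases "j = 0")
  case True
  have "(wspeed (r 0))\<^sup>2 / (rlen (r 0) * rspace (r 0)) = (material_sqrt (r 0))\<^sup>2 / rspace (r 0)"
    using len[of 0] by (simp add: material_sqrt_sq)
  then have "J_plus B chi u (int j)
      = of_real (jac_a r 0) * u 1 + of_real ((material_sqrt (r 0))\<^sup>2 / rspace (r 0)) * u 0"
    unfolding J_plus_def Let_def r_def[symmetric] using True by simp
  then show ?thesis
    using True jac_a_material_sqrt[of r 0, OF len len]
    by (simp add: neumann_lap_def power2_eq_square algebra_simps)
next
  case False
  have "int j - 1 = int (j - 1)" "int (j - 1) + 1 = int j" using False by auto
  then show ?thesis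
    using False jac_a_material_sqrt[of r "int j", OF len len] jac_a_material_sqrt[of r "int (j - 1)", OF len len]
      jac_b_material_sqrt[of r "int j", OF len]
    by (simp add: J_plus_def Let_def neumann_lap_def r_def[symmetric] power2_eq_square algebra_simps)
qed

lemma J_minus_neumann_form:
  fixes B :: "nat \<Rightarrow> resonator list" and chi :: "nat \<Rightarrow> nat"
  defines "r \<equiv> half_line_res B chi"
  assumes len: "\<And>i. rlen (r i) > 0"
  shows "J_minus B chi u (- int j - 1) = of_real (material_sqrt (r (- int j - 1)))
    * neumann_lap (\<lambda>i. 1 / rspace (r (- int i - 2)))
        (\<lambda>i. of_real (material_sqrt (r (- int i - 1))) * u (- int i - 1)) j"
proof (cases "j = 0")
  case True
  have "(wspeed (r (-1)))\<^sup>2 / (rlen (r (-1)) * rspace (r (-2)))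
      = (material_sqrt (r (-1)))\<^sup>2 / rspace (r (-2))"
    using len[of "-1"] by (simp add: material_sqrt_sq)
  then have "J_minus B chi u (- int j - 1)
      = of_real (jac_a r (-2)) * u (-2) + of_real ((material_sqrt (r (-1)))\<^sup>2 / rspace (r (-2))) * u (-1)"
    unfolding J_minus_def Let_def r_def[symmetric] using True by simp
  then show ?thesis
    using True jac_a_material_sqrt[of r "-2", OF len len]
    by (simp add: neumann_lap_def power2_eq_square algebra_simps)
next
  case False
  define p where "p = - int j - 1"
  have p: "- int j - 1 = p" "- int (j + 1) - 1 = p - 1" "- int (j - 1) - 1 = p + 1"
    "- int j - 2 = p - 1" "- int (j - 1) - 2 = p"
    using False by (auto simp: p_def)
  have "J_minus B chi u p = of_real (jac_a r (p - 1)) * u (p - 1) + of_real (jac_a r p) * u (p + 1)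
      + of_real (jac_b r p) * u p"
    unfolding J_minus_def Let_def r_def[symmetric] using False by (simp add: p_def)
  then show ?thesis
    unfolding neumann_lap_of_ne_0[OF False] p
    using jac_a_material_sqrt[of r "p - 1", OF len len] jac_a_material_sqrt[of r p, OF len len]
      jac_b_material_sqrt[of r p, OF len]
    by (simp add: power2_eq_square algebra_simps)
qed

lemma length_concat_map_upt_ge:
  assumes "\<And>k. f k \<noteq> []"
  shows "n \<le> length (concat (map f [0..<n]))"
proof (induction n)
  case (Suc n)
  have "length (f n) \<ge> 1" using assms[of n] by (cases "f n") auto
  with Suc show ?case by simp
qed simp

lemma nth_concat_map_upt_in:
  assumes "\<And>k. f k \<noteq> []"
  shows "concat (map f [0..<n + 1]) ! n \<in> (\<Union>k. set (f k))"
proof -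
  have "n < length (concat (map f [0..<n + 1]))"
    using length_concat_map_upt_ge[of f "n + 1"] assms by simp
  then have "concat (map f [0..<n + 1]) ! n \<in> set (concat (map f [0..<n + 1]))"
    by (rule nth_mem)
  then show ?thesis by auto
qed

lemma nth_concat_map_upt_mono:
  assumes "\<And>k. f k \<noteq> []" and "n < a" "a \<le> b"
  shows "concat (map f [0..<b]) ! n = concat (map f [0..<a]) ! n"
proof -
  have "[0..<b] = [0..<a] @ [a..<b]"
    using \<open>a \<le> b\<close> by (metis le_add_diff_inverse upt_add_eq_append zero_le)
  moreover have "n < length (concat (map f [0..<a]))"
    using length_concat_map_upt_ge[of f a] assms by simp
  ultimately show ?thesis by (simp add: nth_append)
qed

lemma concat_map_upt_periodic:
  assumes "\<And>k. f (k + M) = f k"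
  shows "concat (map f [0..<q * M]) = concat (replicate q (concat (map f [0..<M])))"
proof (induction q)
  case (Suc q)
  have "[0..<Suc q * M] = [0..<q * M] @ map (\<lambda>k. k + q * M) [0..<M]"
    by (metis add.commute map_add_upt mult_Suc upt_add_eq_append zero_le)
  moreover have "f (k + q * M) = f k" for k
    using periodic_shift[of f M q k, OF assms] by (simp add: add.commute)
  ultimately show ?case
    using Suc by (simp add: comp_def flip: replicate_append_same)
qed simp

lemma nth_concat_replicate:
  assumes "j < q * length xs"
  shows "concat (replicate q xs) ! j = xs ! (j mod length xs)"
  using assms
proof (induction q arbitrary: j)
  case (Suc q)
  then show ?case
    by (cases "j < length xs") (auto simp: nth_append le_mod_geq)
qed simp

lemma nth_concat_map_upt_periodic:
  assumes M: "M > 0" and per: "\<And>k. f (k + M) = f k" and ne: "\<And>k. f k \<noteq> []"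
  shows "concat (map f [0..<n + 1]) ! n
       = concat (map f [0..<M]) ! (n mod length (concat (map f [0..<M])))"
proof -
  define L where "L = concat (map f [0..<M])"
  have "M \<le> length L" unfolding L_def by (rule length_concat_map_upt_ge[OF ne])
  then have "n * 1 \<le> n * length L" using M by (intro mult_le_mono2) linarith
  moreover have "(n + 1) * length L = n * length L + length L" by simp
  ultimately have "n < (n + 1) * length L" using M \<open>M \<le> length L\<close> by linarith
  have "(n + 1) * 1 \<le> (n + 1) * M" using M by (intro mult_le_mono2) simp
  then have "concat (map f [0..<n + 1]) ! n = concat (map f [0..<(n + 1) * M]) ! n"
    using nth_concat_map_upt_mono[OF ne, of n "n + 1"] by simp
  also have "\<dots> = concat (replicate (n + 1) L) ! n"
    by (simp only: concat_map_upt_periodic[of f M "n + 1", OF per] L_def)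
  also have "\<dots> = L ! (n mod length L)"
    by (rule nth_concat_replicate) fact
  finally show ?thesis by (simp add: L_def)
qed

lemma half_line_res_in_blocks:
  assumes ne: "\<And>k. B (chi k) \<noteq> []"
  shows "half_line_res B chi i \<in> (\<Union>k. set (B (chi k)))"
proof (cases "i \<ge> 0")
  case True
  then show ?thesis
    using nth_concat_map_upt_in[of "\<lambda>k. B (chi k)" "nat i"] ne by (simp add: half_line_res_def)
next
  case False
  then show ?thesis
    using nth_concat_map_upt_in[of "\<lambda>k. rev (B (chi k))" "nat (- i - 1)"] ne
    by (simp add: half_line_res_def)
qed

lemma half_line_res_pos:
  assumes "\<And>k. is_block (B (chi k))"
  shows "wspeed (half_line_res B chi i) > 0" "rlen (half_line_res B chi i) > 0"
    "rspace (half_line_res B chi i) > 0"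
  using half_line_res_in_blocks[of B chi i] assms by (auto simp: is_block_def)

lemma half_line_res_periodic_nonneg:
  assumes M: "chiM \<noteq> []" and ne: "\<forall>d\<in>set chiM. B d \<noteq> []"
  shows "half_line_res B (\<lambda>k. chiM ! (k mod length chiM)) (int n)
       = fin_array B chiM ! (n mod length (fin_array B chiM))"
proof -
  define f where "f k = B (chiM ! (k mod length chiM))" for k
  have "map f [0..<length chiM] = map B (map ((!) chiM) [0..<length chiM])"
    by (simp add: f_def)
  then have "map f [0..<length chiM] = map B chiM"
    by (simp only: map_nth)
  moreover have "concat (map f [0..<n + 1]) ! n
      = concat (map f [0..<length chiM]) ! (n mod length (concat (map f [0..<length chiM])))"
    using M ne by (intro nth_concat_map_upt_periodic) (auto simp: f_def)
  ultimately show ?thesis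
    by (simp add: half_line_res_def fin_array_def f_def[abs_def])
qed

lemma half_line_res_periodic_neg:
  assumes M: "chiM \<noteq> []" and ne: "\<forall>d\<in>set chiM. B d \<noteq> []"
  shows "half_line_res B (\<lambda>k. chiM ! (length chiM - 1 - k mod length chiM)) (- int n - 1)
       = fin_array B chiM ! (length (fin_array B chiM) - 1 - n mod length (fin_array B chiM))"
proof -
  define f where "f k = rev (B (chiM ! (length chiM - 1 - k mod length chiM)))" for k
  have "map f [0..<length chiM] = map (rev \<circ> B) (map ((!) (rev chiM)) [0..<length (rev chiM)])"
    by (auto simp: f_def rev_nth)
  then have L: "concat (map f [0..<length chiM]) = rev (fin_array B chiM)"
    by (simp only: map_nth) (simp add: fin_array_def rev_concat rev_map)
  have "concat (map f [0..<n + 1]) ! n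
      = concat (map f [0..<length chiM]) ! (n mod length (concat (map f [0..<length chiM])))"
    using M ne by (intro nth_concat_map_upt_periodic) (auto simp: f_def)
  also have "\<dots> = fin_array B chiM ! (length (fin_array B chiM) - 1 - n mod length (fin_array B chiM))"
  proof -
    have "length chiM \<le> length (fin_array B chiM)"
      using length_concat_map_upt_ge[of f "length chiM"] L M ne by (auto simp: f_def)
    then have "fin_array B chiM \<noteq> []" using M by auto
    then show ?thesis using L by (simp add: rev_nth)
  qed
  finally show ?thesis
    by (simp add: half_line_res_def f_def[abs_def])
qed

section \<open>The finite array\<close>

lemma capacitance_mat_row:
  fixes R :: "resonator list" and x :: "nat \<Rightarrow> complex"
  assumes N: "length R \<ge> 2" and i: "i < length R"
  shows "(\<Sum>j<length R. of_real (capacitance_mat R $$ (i, j)) * x j)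
       = neumann_lap ((\<lambda>k. 1 / rspace (R ! k))(length R - 1 := 0)) x i"
proof -
  define s where "s k = rspace (R ! k)" for k
  define d where "d = (if i = 0 then 1 / s 0 else if i = length R - 1 then 1 / s (length R - 2)
      else 1 / s (i - 1) + 1 / s i)"
  have entry: "of_real (capacitance_mat R $$ (i, j)) * x j
      = (if j = i + 1 then - of_real (1 / s i) * x j else 0)
        + (if 0 < i \<and> j = i - 1 then - of_real (1 / s j) * x j else 0)
        + (if j = i then of_real d * x j else 0)" if "j < length R" for j
    using i that by (auto simp: capacitance_mat_def Let_def s_def d_def)
  have "(\<Sum>j<length R. of_real (capacitance_mat R $$ (i, j)) * x j)
      = (if i + 1 < length R then - of_real (1 / s i) * x (i + 1) else 0)
        + (if 0 < i then - of_real (1 / s (i - 1)) * x (i - 1) else 0) + of_real d * x i"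
    using i by (simp add: entry sum.distrib sum.If_cases)
  then show ?thesis
    using i N by (auto simp: neumann_lap_def d_def s_def numeral_2_eq_2 algebra_simps diff_divide_distrib)
qed

lemma material_capacitance_entry:
  assumes "i < length R" "j < length R"
  shows "(material_mat R * capacitance_mat R) $$ (i, j)
       = (wspeed (R ! i))\<^sup>2 / rlen (R ! i) * capacitance_mat R $$ (i, j)"
proof -
  have dim: "dim_row (material_mat R) = length R" "dim_col (material_mat R) = length R"
    "dim_row (capacitance_mat R) = length R" "dim_col (capacitance_mat R) = length R"
    by (simp_all add: material_mat_def capacitance_mat_def Let_def)
  have "(material_mat R * capacitance_mat R) $$ (i, j)
      = (\<Sum>k\<in>{0..<length R}. material_mat R $$ (i, k) * capacitance_mat R $$ (k, j))"
    using assms by (simp add: dim scalar_prod_def)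
  also have "\<dots> = (\<Sum>k\<in>{0..<length R}.
      if k = i then (wspeed (R ! i))\<^sup>2 / rlen (R ! i) * capacitance_mat R $$ (i, j) else 0)"
    using assms(1) by (intro sum.cong) (auto simp: material_mat_def)
  finally show ?thesis using assms by simp
qed

lemma eigenvalue_imp_neumann_eigen:
  assumes pos: "\<forall>r\<in>set R. rlen r > 0" and N: "length R \<ge> 2"
    and ev: "eigenvalue (map_mat complex_of_real (material_mat R * capacitance_mat R)) z"
  shows "\<exists>x. (\<exists>i<length R. x i \<noteq> 0)
           \<and> neumann_eigen (length R) (\<lambda>i. material_sqrt (R ! i)) (\<lambda>i. 1 / rspace (R ! i)) x z"
proof -
  define A where "A = map_mat complex_of_real (material_mat R * capacitance_mat R)"
  have dim: "dim_row A = length R" "dim_col A = length R"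
    by (simp_all add: A_def material_mat_def capacitance_mat_def Let_def)
  have A: "A $$ (i, j) = of_real ((material_sqrt (R ! i))\<^sup>2) * of_real (capacitance_mat R $$ (i, j))"
    if "i < length R" "j < length R" for i j
  proof -
    have "A $$ (i, j) = of_real ((material_mat R * capacitance_mat R) $$ (i, j))"
      unfolding A_def using that dim by (intro index_map_mat) (simp_all add: A_def)
    then show ?thesis
      using that pos by (simp add: material_capacitance_entry material_sqrt_sq)
  qed
  obtain v where v: "v \<in> carrier_vec (length R)" "v \<noteq> 0\<^sub>v (length R)" "A *\<^sub>v v = z \<cdot>\<^sub>v v"
    using ev unfolding eigenvalue_def eigenvector_def A_def[symmetric] dim by blast
  have "\<exists>i<length R. v $ i \<noteq> 0"
    using v(1,2) by (auto intro!: eq_vecI)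
  moreover have "of_real ((material_sqrt (R ! i))\<^sup>2)
      * neumann_lap ((\<lambda>i. 1 / rspace (R ! i))(length R - 1 := 0)) (($) v) i = z * v $ i"
    if i: "i < length R" for i
  proof -
    have "z * v $ i = (A *\<^sub>v v) $ i" using v(1,3) i by simp
    also have "\<dots> = (\<Sum>j\<in>{0..<length R}. A $$ (i, j) * v $ j)"
      using v(1) i dim by (simp add: scalar_prod_def)
    also have "\<dots> = of_real ((material_sqrt (R ! i))\<^sup>2)
        * (\<Sum>j<length R. of_real (capacitance_mat R $$ (i, j)) * v $ j)"
      using i by (simp add: A lessThan_atLeast0 sum_distrib_left mult.assoc)
    also have "\<dots> = of_real ((material_sqrt (R ! i))\<^sup>2)
        * neumann_lap ((\<lambda>i. 1 / rspace (R ! i))(length R - 1 := 0)) (($) v) i"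
      using capacitance_mat_row[OF N i] by simp
    finally show ?thesis ..
  qed
  ultimately show ?thesis by (auto simp: neumann_eigen_def)
qed

lemma op_spectrum_J_plus_periodic:
  fixes B :: "nat \<Rightarrow> resonator list" and chiM :: "nat list"
  defines "R \<equiv> fin_array B chiM"
  assumes blocks: "\<forall>d\<in>set chiM. is_block (B d)" and N: "length R \<ge> 2"
    and eig: "neumann_eigen (length R) (\<lambda>i. material_sqrt (R ! i)) (\<lambda>i. 1 / rspace (R ! i)) x z"
    and x0: "x 0 \<noteq> 0" and c: "c * x 0 = x (length R - 1)" and c_le_1: "cmod c \<le> 1"
  shows "z \<in> op_spectrum {i. i \<ge> 0} (J_plus B (\<lambda>k. chiM ! (k mod length chiM)))"
proof -
  define chi where "chi k = chiM ! (k mod length chiM)" for k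
  define r where "r = half_line_res B chi"
  have M: "chiM \<noteq> []" using N by (auto simp: R_def fin_array_def)
  then have chi: "is_block (B (chi k))" for k using blocks by (simp add: chi_def)
  have r: "r (int n) = R ! (n mod length R)" for n
    using half_line_res_periodic_nonneg[of chiM B n] M blocks
    by (simp add: r_def chi_def[abs_def] R_def is_block_def)
  note r_pos = half_line_res_pos[of B chi, OF chi, folded r_def]
  show ?thesis
    unfolding chi_def[symmetric]
  proof (rule op_spectrum_periodic_neumann_jacobi[where \<phi> = int
        and q = "\<lambda>j. material_sqrt (r (int j))" and w = "\<lambda>j. 1 / rspace (r (int j))"])
    show "range int = {i :: int. i \<ge> 0}"
      by (auto intro: range_eqI[of _ _ "nat _"])
    show "material_sqrt (r (int (j + length R))) = material_sqrt (r (int j))"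
      "1 / rspace (r (int (j + length R))) = 1 / rspace (r (int j))" for j
      by (simp_all only: r mod_add_self2)
    show "material_sqrt (r (int j)) \<noteq> 0" for j
      using material_sqrt_pos[OF r_pos(1,2)] by (simp add: less_imp_neq[symmetric])
    show "J_plus B chi u (int j) = of_real (material_sqrt (r (int j)))
        * neumann_lap (\<lambda>j. 1 / rspace (r (int j))) (\<lambda>i. of_real (material_sqrt (r (int i))) * u (int i)) j"
      for u j unfolding r_def by (rule J_plus_neumann_form) (rule r_pos(2)[unfolded r_def])
    show "neumann_eigen (length R) (\<lambda>j. material_sqrt (r (int j))) (\<lambda>j. 1 / rspace (r (int j))) x z"
      using N by (intro neumann_eigen_cong[OF eig]) (simp_all add: r)
  qed (use N x0 c c_le_1 in auto)
qed

lemma op_spectrum_J_minus_periodic: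
  fixes B :: "nat \<Rightarrow> resonator list" and chiM :: "nat list"
  defines "R \<equiv> fin_array B chiM"
  assumes blocks: "\<forall>d\<in>set chiM. is_block (B d)" and N: "length R \<ge> 2"
    and eig: "neumann_eigen (length R) (\<lambda>i. material_sqrt (R ! i)) (\<lambda>i. 1 / rspace (R ! i)) x z"
    and xN: "x (length R - 1) \<noteq> 0" and c: "c * x (length R - 1) = x 0" and c_le_1: "cmod c \<le> 1"
  shows "z \<in> op_spectrum {i. i < 0} (J_minus B (\<lambda>k. chiM ! (length chiM - 1 - k mod length chiM)))"
proof -
  define chi where "chi k = chiM ! (length chiM - 1 - k mod length chiM)" for k
  define r where "r = half_line_res B chi"
  have M: "chiM \<noteq> []" using N by (auto simp: R_def fin_array_def)
  then have chi: "is_block (B (chi k))" for k using blocks by (simp add: chi_def)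
  have r: "r (- int n - 1) = R ! (length R - 1 - n mod length R)" for n
    using half_line_res_periodic_neg[of chiM B n] M blocks
    by (simp add: r_def chi_def[abs_def] R_def is_block_def)
  have r': "r (- int n - 2) = R ! (length R - 1 - (n + 1) mod length R)" for n
    using r[of "n + 1"] by (simp add: algebra_simps)
  note r_pos = half_line_res_pos[of B chi, OF chi, folded r_def]
  show ?thesis
    unfolding chi_def[symmetric]
  proof (rule op_spectrum_periodic_neumann_jacobi[where \<phi> = "\<lambda>j. - int j - 1"
        and q = "\<lambda>j. material_sqrt (r (- int j - 1))" and w = "\<lambda>j. 1 / rspace (r (- int j - 2))"
        and x = "\<lambda>j. x (length R - 1 - j)"])
    show "inj (\<lambda>j. - int j - 1)" by (auto intro: injI)
    show "range (\<lambda>j. - int j - 1) = {i :: int. i < 0}"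
      by (auto intro: range_eqI[of _ _ "nat (- _ - 1)"])
    show "material_sqrt (r (- int (j + length R) - 1)) = material_sqrt (r (- int j - 1))"
      "1 / rspace (r (- int (j + length R) - 2)) = 1 / rspace (r (- int j - 2))" for j
      using r[of j] r[of "j + length R"] r'[of j] r'[of "j + length R"]
      by (simp_all flip: add_Suc)
    show "material_sqrt (r (- int j - 1)) \<noteq> 0" for j
      using material_sqrt_pos[OF r_pos(1,2)] by (simp add: less_imp_neq[symmetric])
    show "J_minus B chi u (- int j - 1) = of_real (material_sqrt (r (- int j - 1)))
        * neumann_lap (\<lambda>j. 1 / rspace (r (- int j - 2)))
            (\<lambda>i. of_real (material_sqrt (r (- int i - 1))) * u (- int i - 1)) j"
      for u j unfolding r_def by (rule J_minus_neumann_form) (rule r_pos(2)[unfolded r_def])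
    show "neumann_eigen (length R) (\<lambda>j. material_sqrt (r (- int j - 1)))
        (\<lambda>j. 1 / rspace (r (- int j - 2))) (\<lambda>j. x (length R - 1 - j)) z"
      using N by (intro neumann_eigen_cong[OF neumann_eigen_rev[OF eig]]) (simp_all add: r r')
  qed (use N xN c c_le_1 in auto)
qed

lemma fin_array_eigenvalue_imp_neumann_eigen:
  fixes B :: "nat \<Rightarrow> resonator list" and chiM :: "nat list"
  defines "R \<equiv> fin_array B chiM"
  assumes blocks: "\<forall>d\<in>set chiM. is_block (B d)" and N: "length R \<ge> 2"
    and ev: "eigenvalue (map_mat complex_of_real (material_mat R * capacitance_mat R)) z"
  shows "\<exists>x. x 0 \<noteq> 0
           \<and> neumann_eigen (length R) (\<lambda>i. material_sqrt (R ! i)) (\<lambda>i. 1 / rspace (R ! i)) x z"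
proof -
  have pos: "wspeed (R ! i) > 0" "rlen (R ! i) > 0" "rspace (R ! i) > 0" if "i < length R" for i
    using blocks nth_mem[OF that] by (auto simp: R_def fin_array_def is_block_def)
  obtain x where nz: "\<exists>i<length R. x i \<noteq> 0"
    and eig: "neumann_eigen (length R) (\<lambda>i. material_sqrt (R ! i)) (\<lambda>i. 1 / rspace (R ! i)) x z"
    using eigenvalue_imp_neumann_eigen[OF _ N ev] pos(2) by (metis in_set_conv_nth)
  have "x 0 \<noteq> 0"
    by (rule neumann_eigen_first_nonzero[OF eig _ _ nz])
      (use pos material_sqrt_pos in \<open>simp_all add: less_imp_neq[symmetric]\<close>)
  with eig show ?thesis by blast
qed

lemma Sigma_set_J_plusI:
  "z \<in> op_spectrum {i. i \<ge> 0} (J_plus B chi) \<Longrightarrow> (\<And>k. chi k \<in> {1..D}) \<Longrightarrow> z \<in> Sigma_set D B"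
  by (auto simp: Sigma_set_def)

lemma Sigma_set_J_minusI:
  "z \<in> op_spectrum {i. i < 0} (J_minus B chi) \<Longrightarrow> (\<And>k. chi k \<in> {1..D}) \<Longrightarrow> z \<in> Sigma_set D B"
  by (auto simp: Sigma_set_def)

theorem theorem4p7:
  fixes D :: nat and B :: "nat \<Rightarrow> resonator list" and chiM :: "nat list"
  assumes blocks: "\<forall>d\<in>{1..D}. is_block (B d)"
    and chiM: "set chiM \<subseteq> {1..D}"
    and N2: "length (fin_array B chiM) \<ge> 2"
    and ev: "eigenvalue (map_mat complex_of_real
                (material_mat (fin_array B chiM) * capacitance_mat (fin_array B chiM))) z"
  shows "z \<in> Sigma_set D B"
proof -
  let ?R = "fin_array B chiM" and ?M = "length chiM"
  have blocks': "\<forall>d\<in>set chiM. is_block (B d)" using blocks chiM by blast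
  obtain x where x0: "x 0 \<noteq> 0"
    and eig: "neumann_eigen (length ?R) (\<lambda>i. material_sqrt (?R ! i)) (\<lambda>i. 1 / rspace (?R ! i)) x z"
    using fin_array_eigenvalue_imp_neumann_eigen[OF blocks' N2 ev] by blast
  have "chiM \<noteq> []" using N2 by (auto simp: fin_array_def)
  then have chi: "chiM ! (k mod ?M) \<in> {1..D}" "chiM ! (?M - 1 - k mod ?M) \<in> {1..D}" for k
    by (intro subsetD[OF chiM] nth_mem; simp)+
  show ?thesis
  proof (cases "cmod (x (length ?R - 1)) \<le> cmod (x 0)")
    case True
    then have "z \<in> op_spectrum {i. i \<ge> 0} (J_plus B (\<lambda>k. chiM ! (k mod ?M)))"
      using op_spectrum_J_plus_periodic[OF blocks' N2 eig x0, of "x (length ?R - 1) / x 0"] x0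
      by (simp add: norm_divide divide_le_eq_1)
    then show ?thesis using chi(1) by (rule Sigma_set_J_plusI)
  next
    case False
    then have "x (length ?R - 1) \<noteq> 0" by auto
    with False have "z \<in> op_spectrum {i. i < 0} (J_minus B (\<lambda>k. chiM ! (?M - 1 - k mod ?M)))"
      using op_spectrum_J_minus_periodic[OF blocks' N2 eig, of "x 0 / x (length ?R - 1)"]
      by (simp add: norm_divide divide_le_eq_1)
    then show ?thesis using chi(2) by (rule Sigma_set_J_minusI)
  qed
qed

end
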